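(* Let $w_1,\dots,w_n\in\mathbb R_{\ge0}$ be $n$ weights, and let $\mathcal M$ be a loopless matroid whose ground set has size $k\le n$. Suppose we first choose a uniformly random subset of $k$ of the weights $w_1,\dots,w_n$ and then assign these $k$ weights uniformly at random (by a uniformly random bijection) to the elements of $\mathcal M$. Then $\mathbb E[w(\mathrm{OPT}(\mathcal M))]\le \frac{3e}{e-1}\,F(\rho_{\mathcal M})$.
   Context: For a matroid $\mathcal M=(N,\mathcal I)$ with rank function $r$, let $\mathrm{rank}(\mathcal M)=r(N)$. For $S\subseteq N$ and $\lambda\ge0$, $D_{\mathcal M}(S,\lambda)$ is the unique inclusion-wise maximal set among all maximizers of $|U|-\lambda r(U)$ over $U\subseteq S$. The rank-density curve $\rho_{\mathcal M}:\mathbb R_{>0}\to\mathbb R_{\ge0}$ is $\rho_{\mathcal M}(t)=\max\{\lambda\ge0: r(D_{\mathcal M}(N,\lambda))\ge t\}$ for $0<t\le\mathrm{rank}(\mathcal M)$ and $\rho_{\mathcal M}(t)=0$ for $t>\mathrm{rank}(\mathcal M)$. For $a\in[0,n]$, $\eta(a)$ is the expected value of $\max_{i\in R}w_i$ where $R$ is a uniformly random subset of $\{1,\dots,n\}$ of size $\lfloor a\rfloor$, with the convention $\eta(a)=0$ for $a\in[0,1)$. For a function $\rho:\mathbb R_{>0}\to[0,n]$, $F(\rho)=\int_0^\infty\eta(\rho(t))\,dt$. $\mathrm{OPT}(\mathcal M)$ denotes a maximum-weight independent set and $w(I)=\sum_{e\in I}w(e)$. *)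

theory Defs
  imports "HOL-Analysis.Analysis" "HOL-Library.FuncSet"
begin

definition matroid :: "'a set \<Rightarrow> ('a set \<Rightarrow> bool) \<Rightarrow> bool" where
  "matroid N indep \<longleftrightarrow> finite N \<and> (\<forall>I. indep I \<longrightarrow> I \<subseteq> N) \<and> indep {} \<and>
     (\<forall>I J. indep J \<and> I \<subseteq> J \<longrightarrow> indep I) \<and>
     (\<forall>I J. indep I \<and> indep J \<and> card I < card J \<longrightarrow> (\<exists>e\<in>J - I. indep (insert e I)))"

definition loopless :: "'a set \<Rightarrow> ('a set \<Rightarrow> bool) \<Rightarrow> bool" where
  "loopless N indep \<longleftrightarrow> (\<forall>e\<in>N. indep {e})"

definition mrank :: "('a set \<Rightarrow> bool) \<Rightarrow> 'a set \<Rightarrow> nat" where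
  "mrank indep U = Max (card ` {I. I \<subseteq> U \<and> indep I})"

definition dens_maximizers :: "('a set \<Rightarrow> bool) \<Rightarrow> 'a set \<Rightarrow> real \<Rightarrow> 'a set set" where
  "dens_maximizers indep S lam =
     {U. U \<subseteq> S \<and> (\<forall>V. V \<subseteq> S \<longrightarrow>
        real (card V) - lam * real (mrank indep V) \<le> real (card U) - lam * real (mrank indep U))}"

definition densest :: "('a set \<Rightarrow> bool) \<Rightarrow> 'a set \<Rightarrow> real \<Rightarrow> 'a set" where
  "densest indep S lam = (THE D. D \<in> dens_maximizers indep S lam \<and>
       (\<forall>U\<in>dens_maximizers indep S lam. D \<subseteq> U \<longrightarrow> U = D))"

text \<open>Rank-density curve (the maximum is written as a supremum; it is attained).\<close>
definition rank_density :: "'a set \<Rightarrow> ('a set \<Rightarrow> bool) \<Rightarrow> real \<Rightarrow> real" where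
  "rank_density N indep t =
     (if 0 < t \<and> t \<le> real (mrank indep N)
      then Sup {lam. lam \<ge> 0 \<and> real (mrank indep (densest indep N lam)) \<ge> t}
      else 0)"

definition eta :: "(nat \<Rightarrow> real) \<Rightarrow> nat \<Rightarrow> real \<Rightarrow> real" where
  "eta w n a = (if a < 1 then 0 else
     (\<Sum>R\<in>{R. R \<subseteq> {1..n} \<and> card R = nat \<lfloor>a\<rfloor>}. Max (w ` R)) / real (n choose nat \<lfloor>a\<rfloor>))"

definition F_funct :: "(nat \<Rightarrow> real) \<Rightarrow> nat \<Rightarrow> (real \<Rightarrow> real) \<Rightarrow> real" where
  "F_funct w n rho = integral {0<..} (\<lambda>t. eta w n (rho t))"

definition opt_weight :: "'a set \<Rightarrow> ('a set \<Rightarrow> bool) \<Rightarrow> ('a \<Rightarrow> real) \<Rightarrow> real" where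
  "opt_weight N indep c = Max ((\<lambda>I. \<Sum>e\<in>I. c e) ` {I. I \<subseteq> N \<and> indep I})"

definition expected_opt :: "'a set \<Rightarrow> ('a set \<Rightarrow> bool) \<Rightarrow> (nat \<Rightarrow> real) \<Rightarrow> nat \<Rightarrow> real" where
  "expected_opt N indep w n =
     (\<Sum>S\<in>{S. S \<subseteq> {1..n} \<and> card S = card N}.
        (\<Sum>f\<in>{f. bij_betw f N S \<and> f \<in> extensional N}. opt_weight N indep (\<lambda>e. w (f e)))
          / real (card {f. bij_betw f N S \<and> f \<in> extensional N}))
     / real (n choose card N)"

end

theory Submission
  imports Defs
begin

text \<open>
  Fix a threshold \<theta> and let p be the fraction of the weights exceeding \<theta>. Since
  w(I) = \<integral> |{e \<in> I. w e > \<theta>}| d\<theta>, the optimum is at most the integral over \<theta> of the rank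
  of the set of elements receiving a weight above \<theta>. Each element receives such a weight with
  probability p, so by subadditivity of the rank this expected rank is at most r(Y) + p |N - Y|
  for every Y \<subseteq> N. For Y = D(N, J) with J \<approx> 1/p, charging the layers D(N, j) - D(N, j + 1),
  j < J, to the rank indices i with \<rho>(i) \<ge> j bounds this by 2 \<Sum>i. min 1 (\<lfloor>\<rho>(i)\<rfloor> p). Finally
  min 1 (m p) is at most twice the probability that a random m-subset of the weights contains
  one above \<theta>; integrated over \<theta> that probability is \<eta>(m), and F(\<rho>) = \<Sum>i. \<eta>(\<rho>(i)) because \<rho>
  is constant on each interval (i - 1, i]. This gives the constant 4 \<le> 3e/(e - 1).
\<close>

section \<open>Matroid rank\<close>

lemma matroid_finite: "matroid N indep \<Longrightarrow> finite N"
  unfolding matroid_def by blast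

lemma matroid_indep_subset: "matroid N indep \<Longrightarrow> indep I \<Longrightarrow> I \<subseteq> N"
  unfolding matroid_def by blast

lemma matroid_indep_finite: "matroid N indep \<Longrightarrow> indep I \<Longrightarrow> finite I"
  by (meson finite_subset matroid_finite matroid_indep_subset)

lemma matroid_indep_mono: "matroid N indep \<Longrightarrow> indep J \<Longrightarrow> I \<subseteq> J \<Longrightarrow> indep I"
  unfolding matroid_def by blast

lemma matroid_indep_empty: "matroid N indep \<Longrightarrow> indep {}"
  unfolding matroid_def by blast

lemma matroid_augment:
  "matroid N indep \<Longrightarrow> indep I \<Longrightarrow> indep J \<Longrightarrow> card I < card J \<Longrightarrow> \<exists>e\<in>J - I. indep (insert e I)"
  unfolding matroid_def by blast

lemma finite_indep_subsets:
  assumes "matroid N indep"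
  shows "finite {I. I \<subseteq> U \<and> indep I}"
  by (rule finite_subset[of _ "Pow N"])
     (use matroid_indep_subset[OF assms] matroid_finite[OF assms] in auto)

lemma card_le_mrank: "matroid N indep \<Longrightarrow> I \<subseteq> U \<Longrightarrow> indep I \<Longrightarrow> card I \<le> mrank indep U"
  unfolding mrank_def by (rule Max_ge) (auto intro: finite_indep_subsets)

lemma mrank_witness:
  assumes "matroid N indep"
  obtains I where "I \<subseteq> U" "indep I" "card I = mrank indep U"
proof -
  have "mrank indep U \<in> card ` {I. I \<subseteq> U \<and> indep I}"
    unfolding mrank_def using finite_indep_subsets[OF assms] matroid_indep_empty[OF assms]
    by (intro Max_in) auto
  then show ?thesis using that by auto
qed

lemma mrank_empty:
  assumes "matroid N indep"
  shows "mrank indep {} = 0"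
proof -
  obtain I where "I \<subseteq> {}" "indep I" "card I = mrank indep {}" by (rule mrank_witness[OF assms])
  then show ?thesis by simp
qed

lemma mrank_mono:
  assumes M: "matroid N indep" and "A \<subseteq> B"
  shows "mrank indep A \<le> mrank indep B"
proof -
  obtain I where I: "I \<subseteq> A" "indep I" "card I = mrank indep A" by (rule mrank_witness[OF M])
  have "card I \<le> mrank indep B" using I(1) \<open>A \<subseteq> B\<close> by (intro card_le_mrank[OF M _ I(2)]) blast
  then show ?thesis using I(3) by simp
qed

lemma mrank_Un_le:
  assumes M: "matroid N indep" and "finite B"
  shows "mrank indep (A \<union> B) \<le> mrank indep A + card B"
proof -
  obtain I where I: "I \<subseteq> A \<union> B" "indep I" "card I = mrank indep (A \<union> B)"
    by (rule mrank_witness[OF M])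
  have "I = (I \<inter> A) \<union> (I \<inter> B)" using I(1) by blast
  then have "card I = card ((I \<inter> A) \<union> (I \<inter> B))" by (rule arg_cong)
  then have "card I \<le> card (I \<inter> A) + card (I \<inter> B)"
    using card_Un_le[of "I \<inter> A" "I \<inter> B"] by linarith
  moreover have "card (I \<inter> A) \<le> mrank indep A"
    using card_le_mrank[OF M Int_lower2 matroid_indep_mono[OF M I(2) Int_lower1]] .
  moreover have "card (I \<inter> B) \<le> card B" using assms(2) by (simp add: card_mono)
  ultimately show ?thesis using I(3) by linarith
qed

lemma one_le_mrank_if_loopless:
  assumes M: "matroid N indep" and "loopless N indep" "e \<in> N" "e \<in> U"
  shows "1 \<le> mrank indep U"
proof -
  have "indep {e}" using assms(2,3) unfolding loopless_def by blast
  then show ?thesis using card_le_mrank[OF M, of "{e}" U] \<open>e \<in> U\<close> by simp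
qed

lemma indep_extend_to_max:
  assumes M: "matroid N indep"
  shows "indep I \<Longrightarrow> I \<subseteq> U \<Longrightarrow> \<exists>J. I \<subseteq> J \<and> J \<subseteq> U \<and> indep J \<and> card J = mrank indep U"
proof (induction "mrank indep U - card I" arbitrary: I rule: less_induct)
  case less
  obtain K where K: "K \<subseteq> U" "indep K" "card K = mrank indep U" by (rule mrank_witness[OF M])
  show ?case
  proof (cases "card I < card K")
    case True
    then obtain e where e: "e \<in> K - I" "indep (insert e I)"
      using matroid_augment[OF M less.prems(1) K(2)] by blast
    have "card (insert e I) = Suc (card I)"
      using e(1) matroid_indep_finite[OF M less.prems(1)] by simp
    then have "mrank indep U - card (insert e I) < mrank indep U - card I"
      using True K(3) by linarith
    moreover have "insert e I \<subseteq> U" using e(1) K(1) less.prems(2) by blast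
    ultimately have "\<exists>J. insert e I \<subseteq> J \<and> J \<subseteq> U \<and> indep J \<and> card J = mrank indep U"
      using e(2) by (intro less.hyps)
    then show ?thesis by (meson insert_subset)
  next
    case False
    then have "card I = mrank indep U" using card_le_mrank[OF M less.prems(2,1)] K(3) by linarith
    then show ?thesis using less.prems by (intro exI[of _ I]) simp
  qed
qed

text \<open>Extend a maximum independent subset of A \<inter> B to one J of A \<union> B and count J \<inter> A and J \<inter> B.\<close>
lemma mrank_submodular:
  assumes M: "matroid N indep"
  shows "mrank indep (A \<union> B) + mrank indep (A \<inter> B) \<le> mrank indep A + mrank indep B"
proof -
  obtain I where I: "I \<subseteq> A \<inter> B" "indep I" "card I = mrank indep (A \<inter> B)"
    by (rule mrank_witness[OF M])
  obtain J where J: "I \<subseteq> J" "J \<subseteq> A \<union> B" "indep J" "card J = mrank indep (A \<union> B)"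
    using indep_extend_to_max[OF M I(2), of "A \<union> B"] I(1) by blast
  have fJ: "finite J" using matroid_indep_finite[OF M J(3)] .
  have "card (J \<inter> A) + card (J \<inter> B) = card ((J \<inter> A) \<union> (J \<inter> B)) + card ((J \<inter> A) \<inter> (J \<inter> B))"
    using fJ by (intro card_Un_Int) auto
  also have "(J \<inter> A) \<union> (J \<inter> B) = J" using J(2) by blast
  finally have eq: "card (J \<inter> A) + card (J \<inter> B) = card J + card (J \<inter> (A \<inter> B))"
    by (simp add: Int_ac)
  have "card I \<le> card (J \<inter> (A \<inter> B))" using I(1) J(1) fJ by (intro card_mono) auto
  moreover have "card (J \<inter> A) \<le> mrank indep A" "card (J \<inter> B) \<le> mrank indep B"
    using card_le_mrank[OF M Int_lower2 matroid_indep_mono[OF M J(3) Int_lower1]] by auto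
  ultimately show ?thesis using eq I(3) J(4) by linarith
qed

section \<open>Densest sets and the rank-density curve\<close>

definition dens_value :: "('a set \<Rightarrow> bool) \<Rightarrow> real \<Rightarrow> 'a set \<Rightarrow> real" where
  "dens_value indep lam U = real (card U) - lam * real (mrank indep U)"

lemma mem_dens_maximizers_iff:
  "U \<in> dens_maximizers indep S lam \<longleftrightarrow>
     U \<subseteq> S \<and> (\<forall>V. V \<subseteq> S \<longrightarrow> dens_value indep lam V \<le> dens_value indep lam U)"
  unfolding dens_maximizers_def dens_value_def by simp

lemma dens_value_supermodular:
  assumes M: "matroid N indep" and "0 \<le> lam" "U \<subseteq> N" "V \<subseteq> N"
  shows "dens_value indep lam U + dens_value indep lam V
           \<le> dens_value indep lam (U \<union> V) + dens_value indep lam (U \<inter> V)"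
proof -
  have "finite U" "finite V" using assms matroid_finite finite_subset by metis+
  then have "card (U \<union> V) + card (U \<inter> V) = card U + card V" by (rule card_Un_Int[symmetric])
  moreover have "lam * (real (mrank indep (U \<union> V)) + real (mrank indep (U \<inter> V)))
      \<le> lam * (real (mrank indep U) + real (mrank indep V))"
    using mrank_submodular[OF M, of U V] assms(2) by (intro mult_left_mono) linarith+
  ultimately show ?thesis unfolding dens_value_def by (simp add: algebra_simps)
qed

lemma dens_maximizers_Un:
  assumes M: "matroid N indep" and "0 \<le> lam"
    and "U \<in> dens_maximizers indep N lam" "V \<in> dens_maximizers indep N lam"
  shows "U \<union> V \<in> dens_maximizers indep N lam"
proof -
  have U: "U \<subseteq> N" "\<And>W. W \<subseteq> N \<Longrightarrow> dens_value indep lam W \<le> dens_value indep lam U"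
    and V: "V \<subseteq> N" "\<And>W. W \<subseteq> N \<Longrightarrow> dens_value indep lam W \<le> dens_value indep lam V"
    using assms(3,4) unfolding mem_dens_maximizers_iff by auto
  have "dens_value indep lam (U \<inter> V) \<le> dens_value indep lam V" using V(2) U(1) by blast
  then have "dens_value indep lam U \<le> dens_value indep lam (U \<union> V)"
    using dens_value_supermodular[OF assms(1,2) U(1) V(1)] by linarith
  then have "dens_value indep lam W \<le> dens_value indep lam (U \<union> V)" if "W \<subseteq> N" for W
    using U(2)[OF that] by linarith
  then show ?thesis unfolding mem_dens_maximizers_iff using U(1) V(1) by blast
qed

lemma greatest_dens_maximizer:
  assumes M: "matroid N indep" and "0 \<le> lam"
  shows "\<exists>D\<in>dens_maximizers indep N lam. \<forall>V\<in>dens_maximizers indep N lam. V \<subseteq> D"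
proof -
  let ?M = "dens_maximizers indep N lam"
  have fin: "finite ?M"
    by (rule finite_subset[of _ "Pow N"]) (auto simp: mem_dens_maximizers_iff matroid_finite[OF M])
  have ne: "?M \<noteq> {}"
  proof -
    let ?m = "Max (dens_value indep lam ` Pow N)"
    have fin: "finite (dens_value indep lam ` Pow N)" using matroid_finite[OF M] by simp
    have "?m \<in> dens_value indep lam ` Pow N" using fin by (intro Max_in) auto
    then obtain U where U: "U \<subseteq> N" "dens_value indep lam U = ?m" by auto
    have "dens_value indep lam V \<le> dens_value indep lam U" if "V \<subseteq> N" for V
      unfolding U(2) using fin that by (intro Max_ge) auto
    then have "U \<in> ?M" unfolding mem_dens_maximizers_iff using U(1) by blast
    then show ?thesis by blast
  qed
  have "\<Union>F \<in> ?M" if "finite F" "F \<noteq> {}" "F \<subseteq> ?M" for F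
    using that
  proof (induction rule: finite_ne_induct)
    case (insert x F)
    then show ?case using dens_maximizers_Un[OF M assms(2), of x "\<Union>F"] by simp
  qed simp
  from this[OF fin ne order_refl] show ?thesis by (intro bexI[of _ "\<Union>?M"]) auto
qed

lemma densest_eq_greatest:
  assumes "D \<in> dens_maximizers indep N lam" "\<forall>V\<in>dens_maximizers indep N lam. V \<subseteq> D"
  shows "densest indep N lam = D"
  unfolding densest_def
proof (rule the_equality)
  show "D \<in> dens_maximizers indep N lam \<and> (\<forall>U\<in>dens_maximizers indep N lam. D \<subseteq> U \<longrightarrow> U = D)"
    using assms by blast
  fix D' assume "D' \<in> dens_maximizers indep N lam \<and> (\<forall>U\<in>dens_maximizers indep N lam. D' \<subseteq> U \<longrightarrow> U = D')"
  then show "D' = D" using assms by blast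
qed

lemma densest_greatest:
  assumes "matroid N indep" "0 \<le> lam"
  shows "densest indep N lam \<in> dens_maximizers indep N lam"
    and "V \<in> dens_maximizers indep N lam \<Longrightarrow> V \<subseteq> densest indep N lam"
proof -
  obtain D where D: "D \<in> dens_maximizers indep N lam" "\<forall>V\<in>dens_maximizers indep N lam. V \<subseteq> D"
    using greatest_dens_maximizer[OF assms] by blast
  show "densest indep N lam \<in> dens_maximizers indep N lam"
    and "V \<in> dens_maximizers indep N lam \<Longrightarrow> V \<subseteq> densest indep N lam"
    using densest_eq_greatest[OF D] D by auto
qed

lemma densest_subset:
  assumes "matroid N indep" "0 \<le> lam"
  shows "densest indep N lam \<subseteq> N"
  using densest_greatest(1)[OF assms] unfolding mem_dens_maximizers_iff by blast

lemma dens_value_le_densest: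
  assumes "matroid N indep" "0 \<le> lam" "V \<subseteq> N"
  shows "dens_value indep lam V \<le> dens_value indep lam (densest indep N lam)"
  using densest_greatest(1)[OF assms(1,2)] assms(3) unfolding mem_dens_maximizers_iff by blast

text \<open>Since D(\<lambda>') beats D(\<lambda>) \<inter> D(\<lambda>') at \<lambda>' \<ge> \<lambda>, it also beats it at \<lambda>; by supermodularity the union
  then beats D(\<lambda>) at \<lambda>, so it is a maximizer and hence contained in D(\<lambda>).\<close>
lemma densest_antimono:
  assumes M: "matroid N indep" and "0 \<le> lam" "lam \<le> lam'"
  shows "densest indep N lam' \<subseteq> densest indep N lam"
proof -
  let ?D = "densest indep N lam" and ?E = "densest indep N lam'"
  have "0 \<le> lam'" using assms by linarith
  have D: "?D \<subseteq> N" and E: "?E \<subseteq> N" using densest_subset[OF M] assms(2) \<open>0 \<le> lam'\<close> by auto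
  have "dens_value indep lam' (?D \<inter> ?E) \<le> dens_value indep lam' ?E"
    using dens_value_le_densest[OF M \<open>0 \<le> lam'\<close>] E by blast
  moreover have "lam * (real (mrank indep ?E) - real (mrank indep (?D \<inter> ?E)))
      \<le> lam' * (real (mrank indep ?E) - real (mrank indep (?D \<inter> ?E)))"
    using assms(3) mrank_mono[OF M, of "?D \<inter> ?E" ?E] by (intro mult_right_mono) auto
  ultimately have "dens_value indep lam (?D \<inter> ?E) \<le> dens_value indep lam ?E"
    unfolding dens_value_def by (simp add: algebra_simps)
  then have "dens_value indep lam ?D \<le> dens_value indep lam (?D \<union> ?E)"
    using dens_value_supermodular[OF M assms(2) D E] by linarith
  then have "dens_value indep lam W \<le> dens_value indep lam (?D \<union> ?E)" if "W \<subseteq> N" for W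
    using dens_value_le_densest[OF M assms(2) that] by linarith
  then have "?D \<union> ?E \<in> dens_maximizers indep N lam"
    unfolding mem_dens_maximizers_iff using D E by blast
  then show ?thesis using densest_greatest(2)[OF M assms(2)] by blast
qed

text \<open>For \<lambda> \<le> 1 adding elements never decreases |U| - \<lambda> r(U), since the rank grows by at most
  the number of added elements.\<close>
lemma densest_eq_ground:
  assumes M: "matroid N indep" and "0 \<le> lam" "lam \<le> 1"
  shows "densest indep N lam = N"
proof -
  have "dens_value indep lam V \<le> dens_value indep lam N" if "V \<subseteq> N" for V
  proof -
    have fin: "finite N" "finite (N - V)" using matroid_finite[OF M] by auto
    have "mrank indep N \<le> mrank indep V + card (N - V)"
      using mrank_Un_le[OF M fin(2), of V] that by (simp add: Un_absorb1)
    moreover have "card (N - V) = card N - card V" "card V \<le> card N"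
      using that fin by (auto simp: card_Diff_subset finite_subset card_mono)
    moreover have "mrank indep V \<le> mrank indep N" using mrank_mono[OF M that] .
    moreover have "lam * (real (mrank indep N) - real (mrank indep V))
        \<le> 1 * (real (mrank indep N) - real (mrank indep V))"
      using assms(3) \<open>mrank indep V \<le> mrank indep N\<close> by (intro mult_right_mono) auto
    ultimately show ?thesis unfolding dens_value_def by (simp add: algebra_simps)
  qed
  then have "N \<in> dens_maximizers indep N lam" unfolding mem_dens_maximizers_iff by blast
  then show ?thesis
    using densest_greatest(2)[OF M assms(2)] densest_subset[OF M assms(2)] by blast
qed

lemma densest_eq_empty:
  assumes M: "matroid N indep" and L: "loopless N indep" and "real (card N) < lam"
  shows "densest indep N lam = {}"
proof (rule ccontr)
  let ?D = "densest indep N lam"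
  assume "?D \<noteq> {}"
  have "0 \<le> lam" using assms(3) by linarith
  have D: "?D \<subseteq> N" using densest_subset[OF M \<open>0 \<le> lam\<close>] .
  then have "1 \<le> mrank indep ?D"
    using \<open>?D \<noteq> {}\<close> one_le_mrank_if_loopless[OF M L] by blast
  moreover have "card ?D \<le> card N" using D matroid_finite[OF M] by (simp add: card_mono)
  moreover have "lam * 1 \<le> lam * real (mrank indep ?D)"
    using \<open>1 \<le> mrank indep ?D\<close> \<open>0 \<le> lam\<close> by (intro mult_left_mono) auto
  ultimately have "dens_value indep lam ?D < 0"
    unfolding dens_value_def using assms(3) by linarith
  moreover have "dens_value indep lam {} \<le> dens_value indep lam ?D"
    using dens_value_le_densest[OF M \<open>0 \<le> lam\<close>] by blast
  ultimately show False unfolding dens_value_def using mrank_empty[OF M] by simp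
qed

lemma rank_density_ceiling:
  assumes "0 < t"
  shows "rank_density N indep t = rank_density N indep (real (nat \<lceil>t\<rceil>))"
proof -
  have "t \<le> real m \<longleftrightarrow> real (nat \<lceil>t\<rceil>) \<le> real m" for m
  proof -
    have "real (nat \<lceil>t\<rceil>) = of_int \<lceil>t\<rceil>" using assms by simp
    moreover have "t \<le> real m \<longleftrightarrow> \<lceil>t\<rceil> \<le> int m" by (simp add: ceiling_le_iff)
    ultimately show ?thesis by linarith
  qed
  then show ?thesis unfolding rank_density_def using assms by simp
qed

lemma rank_density_eq_0:
  "\<not> (0 < t \<and> t \<le> real (mrank indep N)) \<Longrightarrow> rank_density N indep t = 0"
  unfolding rank_density_def by (simp only: if_False)

lemma le_card_if_mrank_densest_pos:
  assumes M: "matroid N indep" and L: "loopless N indep"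
    and "0 < real (mrank indep (densest indep N lam))"
  shows "lam \<le> real (card N)"
proof (rule ccontr)
  assume "\<not> lam \<le> real (card N)"
  then have "densest indep N lam = {}" by (intro densest_eq_empty[OF M L]) simp
  then show False using assms(3) mrank_empty[OF M] by simp
qed

lemma bdd_above_rank_density_set:
  assumes "matroid N indep" "loopless N indep" "0 < t"
  shows "bdd_above {lam. lam \<ge> 0 \<and> real (mrank indep (densest indep N lam)) \<ge> t}"
proof (rule bdd_aboveI)
  fix lam assume "lam \<in> {lam. lam \<ge> 0 \<and> real (mrank indep (densest indep N lam)) \<ge> t}"
  then show "lam \<le> real (card N)"
    using \<open>0 < t\<close> by (intro le_card_if_mrank_densest_pos[OF assms(1,2)]) auto
qed

lemma le_rank_density:
  assumes "matroid N indep" "loopless N indep" "0 < t" "t \<le> real (mrank indep (densest indep N lam))"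
    and "0 \<le> lam"
  shows "lam \<le> rank_density N indep t"
proof -
  have "t \<le> real (mrank indep N)"
    using assms(4) mrank_mono[OF assms(1) densest_subset[OF assms(1,5)]] by linarith
  then show ?thesis
    unfolding rank_density_def using assms bdd_above_rank_density_set[OF assms(1-3)]
    by (auto intro: cSup_upper)
qed

lemma one_le_rank_density:
  assumes "matroid N indep" "loopless N indep" "0 < t" "t \<le> real (mrank indep N)"
  shows "1 \<le> rank_density N indep t"
  using le_rank_density[OF assms(1-3), of 1] densest_eq_ground[OF assms(1), of 1] assms(4) by simp

lemma rank_density_le_card:
  assumes "matroid N indep" "loopless N indep"
  shows "rank_density N indep t \<le> real (card N)"
proof (cases "0 < t \<and> t \<le> real (mrank indep N)")
  case True
  have "1 \<in> {lam. lam \<ge> 0 \<and> real (mrank indep (densest indep N lam)) \<ge> t}"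
    using densest_eq_ground[OF assms(1), of 1] True by simp
  moreover have "lam \<le> real (card N)"
    if "lam \<in> {lam. lam \<ge> 0 \<and> real (mrank indep (densest indep N lam)) \<ge> t}" for lam
    using that True by (intro le_card_if_mrank_densest_pos[OF assms]) auto
  ultimately have "Sup {lam. lam \<ge> 0 \<and> real (mrank indep (densest indep N lam)) \<ge> t} \<le> real (card N)"
    by (intro cSup_least) blast+
  then show ?thesis unfolding rank_density_def using True by simp
qed (simp add: rank_density_eq_0)

text \<open>\<rho> vanishes outside (0, r(N)] and is constant on each (i - 1, i], so the integral
  defining F is a finite sum.\<close>
lemma F_funct_rank_density_eq_sum:
  assumes "matroid N indep" "loopless N indep"
  shows "F_funct w n (rank_density N indep)
           = (\<Sum>i\<in>{1..mrank indep N}. eta w n (rank_density N indep (real i)))"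
proof -
  let ?R = "mrank indep N"
  define g where "g t = eta w n (rank_density N indep t)" for t
  have g0: "g t = 0" if "\<not> (0 < t \<and> t \<le> real ?R)" for t
    using rank_density_eq_0[OF that] unfolding g_def eta_def by simp
  have "(g has_integral (\<Sum>i\<in>{1..m}. g (real i))) {0..real m}" if "m \<le> ?R" for m
    using that
  proof (induction m)
    case 0
    then show ?case using has_integral_refl(1)[of g 0] by simp
  next
    case (Suc m)
    have last: "(g has_integral g (real (Suc m))) {real m..real (Suc m)}"
    proof (rule has_integral_spike_finite[of "{real m}"])
      fix x assume x: "x \<in> {real m..real (Suc m)} - {real m}"
      then have "\<lceil>x\<rceil> = int m + 1" by (intro ceiling_unique) auto
      then have "nat \<lceil>x\<rceil> = Suc m" by simp
      then have "rank_density N indep x = rank_density N indep (real (Suc m))"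
        using rank_density_ceiling[of x N indep] x by simp
      then show "g x = g (real (Suc m))" unfolding g_def by simp
    qed (use has_integral_const_real[of "g (real (Suc m))" "real m" "real (Suc m)"] in auto)
    have "(g has_integral (\<Sum>i\<in>{1..m}. g (real i))) {0..real m}" using Suc by simp
    then have "(g has_integral (\<Sum>i\<in>{1..m}. g (real i)) + g (real (Suc m))) {0..real (Suc m)}"
      using has_integral_combine[OF _ _ _ last] by simp
    then show ?case by simp
  qed
  then have "(g has_integral (\<Sum>i\<in>{1..?R}. g (real i))) UNIV"
    by (rule has_integral_on_superset[OF _ _ subset_UNIV]) (auto intro: g0)
  moreover have "(\<lambda>x. if x \<in> {0<..} then g x else 0) = g" using g0 by fastforce
  ultimately have "(g has_integral (\<Sum>i\<in>{1..?R}. g (real i))) {0<..}"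
    using has_integral_restrict_UNIV[of "{0<..}" g] by simp
  then show ?thesis unfolding F_funct_def g_def by (rule integral_unique)
qed

section \<open>Uniformly random bijections and subsets\<close>

definition bijs :: "'a set \<Rightarrow> 'b set \<Rightarrow> ('a \<Rightarrow> 'b) set" where
  "bijs N S = {f. bij_betw f N S \<and> f \<in> extensional N}"

definition ksubsets :: "nat \<Rightarrow> nat \<Rightarrow> nat set set" where
  "ksubsets n k = {S. S \<subseteq> {1..n} \<and> card S = k}"

lemma finite_bijs:
  assumes "finite N" "finite S"
  shows "finite (bijs N S)"
proof (rule finite_subset)
  show "bijs N S \<subseteq> (\<Pi>\<^sub>E i\<in>N. S)" unfolding bijs_def bij_betw_def by (auto simp: PiE_def)
  show "finite (\<Pi>\<^sub>E i\<in>N. S)" using assms by (intro finite_PiE) auto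
qed

lemma bijs_nonempty:
  assumes "finite N" "finite S" "card N = card S"
  shows "bijs N S \<noteq> {}"
proof -
  obtain h where "bij_betw h N S" using finite_same_card_bij[OF assms] by blast
  then have "restrict h N \<in> bijs N S" unfolding bijs_def by simp
  then show ?thesis by blast
qed

lemma bijs_mapsto: "f \<in> bijs N S \<Longrightarrow> e \<in> N \<Longrightarrow> f e \<in> S"
  unfolding bijs_def bij_betw_def by auto

lemma sum_card_filter_swap:
  assumes "finite A" "finite B"
  shows "(\<Sum>x\<in>A. real (card {y\<in>B. Q x y})) = (\<Sum>y\<in>B. real (card {x\<in>A. Q x y}))"
proof -
  have card_eq: "real (card {y\<in>C. P y}) = (\<Sum>y\<in>C. of_bool (P y))"
    if "finite C" for C and P :: "_ \<Rightarrow> bool"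
    using that by (simp add: Int_def conj_commute)
  have "(\<Sum>x\<in>A. real (card {y\<in>B. Q x y})) = (\<Sum>x\<in>A. \<Sum>y\<in>B. of_bool (Q x y))"
    by (intro sum.cong refl card_eq assms)
  also have "\<dots> = (\<Sum>y\<in>B. \<Sum>x\<in>A. of_bool (Q x y))" by (rule sum.swap)
  also have "\<dots> = (\<Sum>y\<in>B. real (card {x\<in>A. Q x y}))"
    by (intro sum.cong refl card_eq[symmetric] assms)
  finally show ?thesis .
qed

text \<open>Post-composing with a transposition of S moves the value at e from s to s'.\<close>
lemma card_bijs_value_le:
  assumes "finite N" "finite S" "s \<in> S" "s' \<in> S" "e \<in> N"
  shows "card {f \<in> bijs N S. f e = s} \<le> card {f \<in> bijs N S. f e = s'}"
proof -
  define g where "g f = restrict (Transposition.transpose s s' \<circ> f) N" for f :: "'a \<Rightarrow> 'b"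
  have "inj_on g (bijs N S)"
  proof (rule inj_onI)
    fix f1 f2 assume f: "f1 \<in> bijs N S" "f2 \<in> bijs N S" "g f1 = g f2"
    show "f1 = f2"
    proof (rule extensionalityI[of _ N])
      show "f1 \<in> extensional N" "f2 \<in> extensional N" using f(1,2) unfolding bijs_def by auto
      fix x assume "x \<in> N"
      then have "Transposition.transpose s s' (f1 x) = Transposition.transpose s s' (f2 x)"
        using fun_cong[OF f(3), of x] unfolding g_def by simp
      then show "f1 x = f2 x" by (metis transpose_involutory)
    qed
  qed
  moreover have "g ` {f \<in> bijs N S. f e = s} \<subseteq> {f \<in> bijs N S. f e = s'}"
  proof
    fix h assume "h \<in> g ` {f \<in> bijs N S. f e = s}"
    then obtain f where f: "f \<in> bijs N S" "f e = s" "h = g f" by blast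
    have "bij_betw (Transposition.transpose s s' \<circ> f) N S"
      using f(1) assms(3,4) unfolding bijs_def by (auto intro: bij_betw_trans)
    then show "h \<in> {f \<in> bijs N S. f e = s'}"
      using f assms(5) unfolding bijs_def g_def by simp
  qed
  moreover have "finite {f \<in> bijs N S. f e = s'}" using finite_bijs[OF assms(1,2)] by simp
  ultimately show ?thesis by (intro card_inj_on_le[of g]) (auto intro: inj_on_subset)
qed

lemma card_bijs_value:
  assumes "finite N" "finite S" "card N = card S" "e \<in> N" "s \<in> S"
  shows "card {f \<in> bijs N S. f e = s} * card N = card (bijs N S)"
proof -
  have "bijs N S = (\<Union>s'\<in>S. {f \<in> bijs N S. f e = s'})" using bijs_mapsto[OF _ assms(4)] by blast
  then have "card (bijs N S) = card (\<Union>s'\<in>S. {f \<in> bijs N S. f e = s'})" by simp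
  also have "\<dots> = (\<Sum>s'\<in>S. card {f \<in> bijs N S. f e = s'})"
    by (rule card_UN_disjoint) (auto simp: assms(2) finite_bijs[OF assms(1,2)])
  also have "\<dots> = (\<Sum>s'\<in>S. card {f \<in> bijs N S. f e = s})"
  proof (rule sum.cong[OF refl])
    fix s' assume "s' \<in> S"
    show "card {f \<in> bijs N S. f e = s'} = card {f \<in> bijs N S. f e = s}"
      using card_bijs_value_le[OF assms(1,2) \<open>s' \<in> S\<close> assms(5,4)]
        card_bijs_value_le[OF assms(1,2,5) \<open>s' \<in> S\<close> assms(4)] by (rule le_antisym)
  qed
  finally show ?thesis using assms(3) by (simp add: mult.commute)
qed

lemma sum_card_preimage_bijs:
  assumes "finite N" "finite S" "card N = card S" "Z \<subseteq> N"
  shows "(\<Sum>f\<in>bijs N S. real (card {e\<in>Z. f e \<in> P})) * real (card N)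
           = real (card Z) * real (card (S \<inter> P)) * real (card (bijs N S))"
proof -
  have "finite Z" using assms(1,4) finite_subset by blast
  have count: "real (card {f\<in>bijs N S. f e \<in> P}) * real (card N)
      = real (card (S \<inter> P)) * real (card (bijs N S))" if "e \<in> Z" for e
  proof -
    have eN: "e \<in> N" using that assms(4) by blast
    have "{f\<in>bijs N S. f e \<in> P} = (\<Union>s\<in>S \<inter> P. {f \<in> bijs N S. f e = s})"
      using bijs_mapsto[OF _ eN] by blast
    then have "card {f\<in>bijs N S. f e \<in> P} = card (\<Union>s\<in>S \<inter> P. {f \<in> bijs N S. f e = s})"
      by simp
    also have "\<dots> = (\<Sum>s\<in>S \<inter> P. card {f \<in> bijs N S. f e = s})"
      by (rule card_UN_disjoint) (auto simp: assms(2) finite_bijs[OF assms(1,2)])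
    finally have "card {f\<in>bijs N S. f e \<in> P} * card N
        = (\<Sum>s\<in>S \<inter> P. card {f \<in> bijs N S. f e = s} * card N)"
      by (simp add: sum_distrib_right)
    also have "\<dots> = (\<Sum>s\<in>S \<inter> P. card (bijs N S))"
      by (rule sum.cong[OF refl]) (simp add: card_bijs_value[OF assms(1-3) eN])
    finally have "card {f\<in>bijs N S. f e \<in> P} * card N = card (S \<inter> P) * card (bijs N S)"
      by simp
    then show ?thesis by (simp only: of_nat_mult[symmetric])
  qed
  have "(\<Sum>f\<in>bijs N S. real (card {e\<in>Z. f e \<in> P}))
      = (\<Sum>e\<in>Z. real (card {f\<in>bijs N S. f e \<in> P}))"
    by (rule sum_card_filter_swap[OF finite_bijs[OF assms(1,2)] \<open>finite Z\<close>])
  then have "(\<Sum>f\<in>bijs N S. real (card {e\<in>Z. f e \<in> P})) * real (card N)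
      = (\<Sum>e\<in>Z. real (card {f\<in>bijs N S. f e \<in> P}) * real (card N))"
    by (simp add: sum_distrib_right)
  also have "\<dots> = (\<Sum>e\<in>Z. real (card (S \<inter> P)) * real (card (bijs N S)))"
    by (rule sum.cong[OF refl count])
  finally show ?thesis by simp
qed

lemma finite_ksubsets: "finite (ksubsets n k)"
  unfolding ksubsets_def by (rule finite_subset[of _ "Pow {1..n}"]) auto

lemma card_ksubsets: "card (ksubsets n k) = n choose k"
  unfolding ksubsets_def using n_subsets[of "{1..n}" k] by simp

lemma card_ksubsets_mem_le:
  assumes "p \<in> {1..n}" "p' \<in> {1..n}"
  shows "card {S \<in> ksubsets n k. p \<in> S} \<le> card {S \<in> ksubsets n k. p' \<in> S}"
proof -
  let ?g = "image (Transposition.transpose p p')"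
  have "inj_on ?g {S \<in> ksubsets n k. p \<in> S}"
    by (rule inj_on_inverseI[of _ ?g]) (simp add: image_comp)
  moreover have "?g ` {S \<in> ksubsets n k. p \<in> S} \<subseteq> {S \<in> ksubsets n k. p' \<in> S}"
  proof safe
    fix S assume S: "S \<in> ksubsets n k" "p \<in> S"
    have "?g S \<subseteq> {1..n}" using S(1) assms unfolding ksubsets_def by (auto simp: Transposition.transpose_def)
    moreover have "card (?g S) = k" using S(1) unfolding ksubsets_def by (simp add: card_image)
    ultimately show "?g S \<in> ksubsets n k" unfolding ksubsets_def by blast
    show "p' \<in> ?g S" using S(2) by (rule rev_image_eqI) simp
  qed
  ultimately show ?thesis by (intro card_inj_on_le) (auto intro: finite_subset[OF _ finite_ksubsets])
qed

lemma card_ksubsets_mem: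
  assumes "p \<in> {1..n}"
  shows "real (card {S \<in> ksubsets n k. p \<in> S}) * real n = real k * real (n choose k)"
proof -
  have "(\<Sum>p'\<in>{1..n}. real (card {S \<in> ksubsets n k. p \<in> S}))
      = (\<Sum>p'\<in>{1..n}. real (card {S \<in> ksubsets n k. p' \<in> S}))"
  proof (rule sum.cong[OF refl])
    fix p' assume "p' \<in> {1..n}"
    then show "real (card {S \<in> ksubsets n k. p \<in> S}) = real (card {S \<in> ksubsets n k. p' \<in> S})"
      using card_ksubsets_mem_le[OF assms, of p' k] card_ksubsets_mem_le[OF _ assms, of p' k] by simp
  qed
  also have "\<dots> = (\<Sum>S\<in>ksubsets n k. real (card {p'\<in>{1..n}. p' \<in> S}))"
    by (rule sum_card_filter_swap) (auto simp: finite_ksubsets)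
  also have "\<dots> = (\<Sum>S\<in>ksubsets n k. real k)"
  proof (rule sum.cong[OF refl])
    fix S assume "S \<in> ksubsets n k"
    then have "{p'\<in>{1..n}. p' \<in> S} = S" "card S = k" unfolding ksubsets_def by auto
    then show "real (card {p'\<in>{1..n}. p' \<in> S}) = real k" by simp
  qed
  finally have "real n * real (card {S \<in> ksubsets n k. p \<in> S}) = real (n choose k) * real k"
    by (simp add: card_ksubsets)
  then show ?thesis by (simp add: ac_simps)
qed

lemma sum_card_Int_ksubsets:
  assumes "P \<subseteq> {1..n}"
  shows "(\<Sum>S\<in>ksubsets n k. real (card (S \<inter> P))) * real n = real (card P) * real k * real (n choose k)"
proof -
  have "(\<Sum>S\<in>ksubsets n k. real (card (S \<inter> P))) = (\<Sum>S\<in>ksubsets n k. real (card {p\<in>P. p \<in> S}))"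
    by (intro sum.cong refl arg_cong[where f = "\<lambda>x. real (card x)"]) blast
  also have "\<dots> = (\<Sum>p\<in>P. real (card {S\<in>ksubsets n k. p \<in> S}))"
    using assms by (intro sum_card_filter_swap[symmetric]) (auto simp: finite_ksubsets finite_subset)
  finally have "(\<Sum>S\<in>ksubsets n k. real (card (S \<inter> P))) * real n
      = (\<Sum>p\<in>P. real (card {S\<in>ksubsets n k. p \<in> S}) * real n)"
    by (simp add: sum_distrib_right)
  also have "\<dots> = (\<Sum>p\<in>P. real k * real (n choose k))"
    using assms by (intro sum.cong refl card_ksubsets_mem) blast
  finally show ?thesis by simp
qed

section \<open>Binomial estimates\<close>

lemma choose_mult_power_le:
  assumes "a \<le> b"
  shows "(a choose m) * b ^ m \<le> (b choose m) * a ^ m"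
proof (induction m)
  case 0
  then show ?case by simp
next
  case (Suc m)
  have Suc_choose: "Suc m * (x choose Suc m) = (x - m) * (x choose m)" for x
    using binomial_absorption[of m x] binomial_absorb_comp[of x m] by simp
  have "(a - m) * b \<le> (b - m) * a"
  proof (cases "m \<le> a")
    case True
    have "real a * real m \<le> real b * real m" using assms by (intro mult_right_mono) auto
    then have "(real a - real m) * real b \<le> (real b - real m) * real a" by (simp add: algebra_simps)
    then show ?thesis using True assms by (simp flip: of_nat_diff of_nat_mult)
  qed simp
  then have "((a choose m) * b ^ m) * ((a - m) * b) \<le> ((b choose m) * a ^ m) * ((b - m) * a)"
    by (rule mult_mono[OF Suc.IH]) auto
  then have "Suc m * ((a choose Suc m) * b ^ Suc m) \<le> Suc m * ((b choose Suc m) * a ^ Suc m)"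
    by (simp only: mult.assoc[symmetric] Suc_choose) (simp only: power_Suc mult_ac)
  then show ?case by (meson mult_le_cancel1 zero_less_Suc)
qed

lemma choose_ratio_le_power:
  assumes "m \<le> n" "q \<le> n"
  shows "real ((n - q) choose m) / real (n choose m) \<le> (1 - real q / real n) ^ m"
proof (cases "n = 0")
  case False
  have "real ((n - q) choose m) * real n ^ m \<le> real (n choose m) * real (n - q) ^ m"
    using choose_mult_power_le[of "n - q" n m] by (metis diff_le_self of_nat_le_iff of_nat_mult of_nat_power)
  moreover have "(1 - real q / real n) ^ m = real (n - q) ^ m / real n ^ m"
    using assms False by (simp add: of_nat_diff field_simps power_divide)
  moreover have "0 < real (n choose m)" using assms by simp
  ultimately show ?thesis using False by (simp add: field_simps)
qed (use assms in simp)

lemma one_minus_power_mult_le_one: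
  assumes "0 \<le> x" "x \<le> 1"
  shows "(1 - x) ^ m * (1 + real m * x) \<le> 1"
proof -
  have "(1 - x) ^ m * (1 + real m * x) \<le> (1 - x) ^ m * (1 + x) ^ m"
    using Bernoulli_inequality[of x m] assms by (intro mult_left_mono) auto
  also have "\<dots> = (1 - x * x) ^ m" by (simp add: power_mult_distrib[symmetric] algebra_simps)
  also have "\<dots> \<le> 1" using assms by (intro power_le_one) (auto simp: mult_le_one)
  finally show ?thesis .
qed

text \<open>If q of n weights lie above a threshold, a random m-subset misses all of them with
  probability C(n - q, m)/C(n, m) \<le> (1 - x)^m, where x = q/n, and
  (1 - x)^m \<le> 1/(1 + m x) \<le> 1 - min 1 (m x)/2.\<close>
lemma half_min_le_one_minus_choose_ratio:
  assumes "m \<le> n" "q \<le> n"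
  shows "min 1 (real m * (real q / real n)) / 2 \<le> 1 - real ((n - q) choose m) / real (n choose m)"
proof -
  define x where "x = real q / real n"
  define r where "r = real ((n - q) choose m) / real (n choose m)"
  have x: "0 \<le> x" "x \<le> 1" using assms unfolding x_def by (auto simp: divide_le_eq)
  have "r \<le> (1 - x) ^ m" using choose_ratio_le_power[OF assms] unfolding r_def x_def .
  then have "r * (1 + real m * x) \<le> (1 - x) ^ m * (1 + real m * x)"
    using x by (intro mult_right_mono) auto
  also have "\<dots> \<le> 1" by (rule one_minus_power_mult_le_one[OF x])
  finally have rb: "r * (1 + real m * x) \<le> 1" .
  have "0 \<le> r" "0 \<le> real m * x" using x unfolding r_def by auto
  have "min 1 (real m * x) / 2 \<le> 1 - r"
  proof (cases "real m * x \<le> 1")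
    case True
    then have "(real m * x) * (real m * x) \<le> real m * x"
      using \<open>0 \<le> real m * x\<close> by (simp add: mult_left_le)
    then have "(1 - real m * x / 2) * (1 + real m * x) \<ge> 1" by (simp add: algebra_simps)
    then have "r * (1 + real m * x) \<le> (1 - real m * x / 2) * (1 + real m * x)" using rb by linarith
    then show ?thesis using True \<open>0 \<le> real m * x\<close> by (simp add: mult_le_cancel_right)
  next
    case False
    then have "r * 2 \<le> r * (1 + real m * x)" using \<open>0 \<le> r\<close> by (intro mult_left_mono) auto
    then show ?thesis using rb False by simp
  qed
  then show ?thesis unfolding x_def r_def .
qed

section \<open>Integrals over thresholds\<close>

lemma has_integral_of_bool_less:
  fixes a B :: real
  assumes "0 \<le> a" "a \<le> B"
  shows "((\<lambda>\<theta>. of_bool (\<theta> < a)) has_integral a) {0..B}"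
proof -
  have "((\<lambda>\<theta>. of_bool (\<theta> < a)) has_integral a) {0..a}"
  proof (rule has_integral_spike_finite[of "{a}"])
    show "((\<lambda>x. 1) has_integral a) {0..a}" using has_integral_const_real[of "1::real" 0 a] assms by simp
  qed auto
  moreover have "((\<lambda>\<theta>. of_bool (\<theta> < a)) has_integral 0) {a..B}"
    by (rule has_integral_eq[rotated, OF has_integral_0]) auto
  ultimately have "((\<lambda>\<theta>. of_bool (\<theta> < a)) has_integral a + 0) {0..B}"
    by (rule has_integral_combine[OF assms])
  then show ?thesis by simp
qed

lemma antimono_integrable_on:
  fixes f :: "real \<Rightarrow> real"
  assumes "antimono f"
  shows "f integrable_on {a..b}"
proof -
  have "mono_on {a..b} (\<lambda>x. - f x)" using assms by (auto simp: mono_on_def antimono_def)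
  then show ?thesis using integrable_neg[OF integrable_on_mono_on] by fastforce
qed

lemma antimono_mrank_threshold:
  "matroid N indep \<Longrightarrow> antimono (\<lambda>\<theta>. real (mrank indep {e\<in>N. \<theta> < c e}))"
  unfolding antimono_def by (auto intro!: mrank_mono)

lemma opt_weight_le_integral_mrank_threshold:
  assumes M: "matroid N indep" and c: "\<And>e. e \<in> N \<Longrightarrow> 0 \<le> c e \<and> c e \<le> B"
  shows "opt_weight N indep c \<le> integral {0..B} (\<lambda>\<theta>. real (mrank indep {e\<in>N. \<theta> < c e}))"
proof -
  have "opt_weight N indep c \<in> (\<lambda>I. \<Sum>e\<in>I. c e) ` {I. I \<subseteq> N \<and> indep I}"
    unfolding opt_weight_def using finite_indep_subsets[OF M] matroid_indep_empty[OF M]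
    by (intro Max_in) auto
  then obtain I where I: "I \<subseteq> N" "indep I" "opt_weight N indep c = (\<Sum>e\<in>I. c e)" by auto
  have "finite I" using matroid_indep_finite[OF M I(2)] .
  have sum_int: "((\<lambda>\<theta>. \<Sum>e\<in>I. of_bool (\<theta> < c e)) has_integral (\<Sum>e\<in>I. c e)) {0..B}"
    using c I(1) by (intro has_integral_sum[OF \<open>finite I\<close>] has_integral_of_bool_less) auto
  have rank_int: "((\<lambda>\<theta>. real (mrank indep {e\<in>N. \<theta> < c e})) has_integral
      integral {0..B} (\<lambda>\<theta>. real (mrank indep {e\<in>N. \<theta> < c e}))) {0..B}"
    by (rule integrable_integral[OF antimono_integrable_on[OF antimono_mrank_threshold[OF M]]])
  have "(\<Sum>e\<in>I. of_bool (\<theta> < c e)) \<le> real (mrank indep {e\<in>N. \<theta> < c e})" for \<theta>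
  proof -
    have "(\<Sum>e\<in>I. of_bool (\<theta> < c e)) = real (card {e\<in>I. \<theta> < c e})"
      using \<open>finite I\<close> by (simp add: Int_def conj_commute)
    also have "card {e\<in>I. \<theta> < c e} \<le> mrank indep {e\<in>N. \<theta> < c e}"
      using I(1) by (intro card_le_mrank[OF M] matroid_indep_mono[OF M I(2)]) auto
    finally show ?thesis by simp
  qed
  then have "(\<Sum>e\<in>I. c e) \<le> integral {0..B} (\<lambda>\<theta>. real (mrank indep {e\<in>N. \<theta> < c e}))"
    using has_integral_le[OF sum_int rank_int] by blast
  then show ?thesis using I(3) by simp
qed

definition hit_prob :: "(nat \<Rightarrow> real) \<Rightarrow> nat \<Rightarrow> nat \<Rightarrow> real \<Rightarrow> real" where
  "hit_prob w n m \<theta> = (\<Sum>R\<in>ksubsets n m. of_bool (\<theta> < Max (w ` R))) / real (n choose m)"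

lemma has_integral_hit_prob:
  assumes w: "\<And>i. i \<in> {1..n} \<Longrightarrow> 0 \<le> w i \<and> w i \<le> B" and "1 \<le> a"
  shows "(hit_prob w n (nat \<lfloor>a\<rfloor>) has_integral eta w n a) {0..B}"
proof -
  let ?m = "nat \<lfloor>a\<rfloor>"
  have "((\<lambda>\<theta>. \<Sum>R\<in>ksubsets n ?m. of_bool (\<theta> < Max (w ` R))) has_integral
          (\<Sum>R\<in>ksubsets n ?m. Max (w ` R))) {0..B}"
  proof (rule has_integral_sum[OF finite_ksubsets has_integral_of_bool_less])
    fix R assume R: "R \<in> ksubsets n ?m"
    then have "finite R" "R \<noteq> {}" "R \<subseteq> {1..n}"
      using \<open>1 \<le> a\<close> by (auto simp: ksubsets_def finite_subset)
    then have "Max (w ` R) \<in> w ` R" by (intro Max_in) auto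
    then obtain x where "x \<in> R" "Max (w ` R) = w x" by auto
    then show "0 \<le> Max (w ` R)" "Max (w ` R) \<le> B" using w \<open>R \<subseteq> {1..n}\<close> by auto
  qed
  then show ?thesis
    unfolding hit_prob_def eta_def ksubsets_def using \<open>1 \<le> a\<close> by (simp add: has_integral_divide)
qed

lemma hit_prob_eq:
  assumes "1 \<le> m" "m \<le> n"
  shows "hit_prob w n m \<theta>
           = 1 - real ((n - card {i\<in>{1..n}. \<theta> < w i}) choose m) / real (n choose m)"
proof -
  let ?P = "{i\<in>{1..n}. \<theta> < w i}"
  let ?Q = "{R \<in> ksubsets n m. \<not> \<theta> < Max (w ` R)}"
  have "R \<in> ?Q \<longleftrightarrow> R \<subseteq> {1..n} - ?P \<and> card R = m" for R
  proof (cases "R \<in> ksubsets n m")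
    case True
    then have "\<theta> < Max (w ` R) \<longleftrightarrow> (\<exists>x\<in>R. \<theta> < w x)"
      using assms(1) unfolding ksubsets_def by (subst Max_gr_iff) (auto simp: finite_subset)
    then show ?thesis using True unfolding ksubsets_def by auto
  qed (auto simp: ksubsets_def)
  then have "?Q = {R. R \<subseteq> {1..n} - ?P \<and> card R = m}" by blast
  moreover have "card ({1..n} - ?P) = n - card ?P" by (subst card_Diff_subset) auto
  ultimately have "card ?Q = (n - card ?P) choose m" by (simp add: n_subsets)
  moreover have "{R\<in>ksubsets n m. \<theta> < Max (w ` R)} = ksubsets n m - ?Q" by blast
  moreover have "card (ksubsets n m - ?Q) = card (ksubsets n m) - card ?Q"
    by (rule card_Diff_subset) (auto intro: finite_subset[OF _ finite_ksubsets])
  moreover have "card ?Q \<le> card (ksubsets n m)" by (rule card_mono[OF finite_ksubsets]) auto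
  moreover have "0 < n choose m" using assms(2) by simp
  ultimately show ?thesis
    unfolding hit_prob_def using finite_ksubsets
    by (simp add: Int_def conj_commute card_ksubsets of_nat_diff field_simps)
qed

lemma min_le_twice_hit_prob:
  assumes "1 \<le> m" "m \<le> n"
  shows "min 1 (real m * (real (card {i\<in>{1..n}. \<theta> < w i}) / real n)) \<le> 2 * hit_prob w n m \<theta>"
proof -
  have "card {i\<in>{1..n}. \<theta> < w i} \<le> card {1..n}" by (rule card_mono) auto
  then have "card {i\<in>{1..n}. \<theta> < w i} \<le> n" by simp
  then have "min 1 (real m * (real (card {i\<in>{1..n}. \<theta> < w i}) / real n)) / 2
      \<le> hit_prob w n m \<theta>"
    unfolding hit_prob_eq[OF assms] by (rule half_min_le_one_minus_choose_ratio[OF assms(2)])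
  moreover have "x / 2 \<le> y \<Longrightarrow> x \<le> 2 * y" for x y :: real by linarith
  ultimately show ?thesis by blast
qed

section \<open>Layers of the densest sets\<close>

text \<open>Abel summation over the layers (a (j + 1), a j] of the index range {1..a 1}.\<close>
lemma sum_layers_le:
  fixes a :: "nat \<Rightarrow> nat" and g G :: "nat \<Rightarrow> real"
  assumes mono: "\<And>j. 1 \<le> j \<Longrightarrow> j < J \<Longrightarrow> a (Suc j) \<le> a j"
    and le: "\<And>i j. 1 \<le> i \<Longrightarrow> i \<le> a j \<Longrightarrow> 1 \<le> j \<Longrightarrow> j \<le> J \<Longrightarrow> G j \<le> g i"
    and "1 \<le> J"
  shows "G J * real (a J) + (\<Sum>j\<in>{1..<J}. G j * (real (a j) - real (a (Suc j))))
           \<le> (\<Sum>i\<in>{1..a 1}. g i)"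
proof -
  have "G J * real (a J) + (\<Sum>j\<in>{s..<J}. G j * (real (a j) - real (a (Suc j))))
          \<le> (\<Sum>i\<in>{1..a s}. g i)" if "1 \<le> s" "s \<le> J" for s
    using that
  proof (induction "J - s" arbitrary: s)
    case 0
    then have "s = J" by simp
    then have "(\<Sum>i\<in>{1..a J}. G J) \<le> (\<Sum>i\<in>{1..a J}. g i)" using le 0 by (intro sum_mono) auto
    then show ?case using \<open>s = J\<close> by (simp add: mult.commute)
  next
    case (Suc d)
    then have "s < J" by linarith
    have am: "a (Suc s) \<le> a s" using mono Suc.prems \<open>s < J\<close> by simp
    have split: "{1..a s} = {1..a (Suc s)} \<union> {a (Suc s)<..a s}" using am by auto
    have "(\<Sum>i\<in>{1..a s}. g i) = (\<Sum>i\<in>{1..a (Suc s)}. g i) + (\<Sum>i\<in>{a (Suc s)<..a s}. g i)"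
      unfolding split by (rule sum.union_disjoint) auto
    moreover have "G s * (real (a s) - real (a (Suc s))) \<le> (\<Sum>i\<in>{a (Suc s)<..a s}. g i)"
      using sum_mono[of "{a (Suc s)<..a s}" "\<lambda>_. G s" g] le Suc.prems \<open>s < J\<close> am
      by (simp add: of_nat_diff mult.commute)
    moreover have "G J * real (a J) + (\<Sum>j\<in>{Suc s..<J}. G j * (real (a j) - real (a (Suc j))))
        \<le> (\<Sum>i\<in>{1..a (Suc s)}. g i)"
      using Suc.hyps(1)[of "Suc s"] Suc.hyps(2) \<open>s < J\<close> by simp
    ultimately show ?case using \<open>s < J\<close> by (simp add: sum.atLeast_Suc_lessThan)
  qed
  then show ?thesis using \<open>1 \<le> J\<close> by simp
qed

lemma card_densest_diff_le:
  assumes M: "matroid N indep" and "0 \<le> lam" "0 \<le> lam'"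
  shows "real (card (densest indep N lam)) - real (card (densest indep N lam'))
           \<le> lam' * (real (mrank indep (densest indep N lam)) - real (mrank indep (densest indep N lam')))"
  using dens_value_le_densest[OF M assms(3) densest_subset[OF M assms(2)]]
  unfolding dens_value_def by (simp add: algebra_simps)

lemma le_floor_rank_density:
  assumes "matroid N indep" "loopless N indep" "1 \<le> i" "i \<le> mrank indep (densest indep N (real j))"
  shows "j \<le> nat \<lfloor>rank_density N indep (real i)\<rfloor>"
proof -
  have "real j \<le> rank_density N indep (real i)"
    using assms by (intro le_rank_density) auto
  then show ?thesis by (simp add: le_nat_floor)
qed

lemma floor_rank_density_bounds:
  assumes "matroid N indep" "loopless N indep" "i \<in> {1..mrank indep N}"
  shows "1 \<le> nat \<lfloor>rank_density N indep (real i)\<rfloor>" "nat \<lfloor>rank_density N indep (real i)\<rfloor> \<le> card N"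
  using one_le_rank_density[OF assms(1,2), of "real i"] rank_density_le_card[OF assms(1,2), of "real i"]
    assms(3) by (auto simp: le_nat_floor nat_le_iff floor_le_iff)

lemma exists_threshold_index:
  assumes "1 \<le> K"
  shows "\<exists>J. 1 \<le> J \<and> J \<le> K \<and> (\<forall>j<J. real j * p \<le> 1) \<and> (J < K \<longrightarrow> 1 \<le> real J * p)"
proof -
  define J where "J = (LEAST j. 1 \<le> j \<and> (K \<le> j \<or> 1 \<le> real j * p))"
  have "1 \<le> J \<and> (K \<le> J \<or> 1 \<le> real J * p)"
    unfolding J_def by (rule LeastI[of _ K]) (use assms in auto)
  moreover have "J \<le> K" unfolding J_def by (rule Least_le) (use assms in auto)
  moreover have "real j * p \<le> 1" if "j < J" for j
  proof (cases "j = 0")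
    case False
    then have "\<not> (K \<le> j \<or> 1 \<le> real j * p)" using not_less_Least[OF that[unfolded J_def]] by auto
    then show ?thesis by linarith
  qed simp
  ultimately show ?thesis by (intro exI[of _ J]) auto
qed

text \<open>Charge the layer D(N, j) - D(N, j + 1), j < J, of the nested densest sets at rate p/2
  per element: it has at most (j + 1) times as many elements as it adds to the rank, and on
  the rank indices it adds \<rho> \<ge> j, hence min 1 (\<lfloor>\<rho>\<rfloor> p) \<ge> j p.\<close>
lemma densest_layer_bound:
  assumes M: "matroid N indep" and L: "loopless N indep" and "0 \<le> p" "1 \<le> J"
    and low: "\<And>j. j < J \<Longrightarrow> real j * p \<le> 1"
    and high: "0 < mrank indep (densest indep N (real J)) \<Longrightarrow> 1 \<le> real J * p"
  shows "real (mrank indep (densest indep N (real J))) + real (card (N - densest indep N (real J))) * p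
           \<le> 2 * (\<Sum>i\<in>{1..mrank indep N}. min 1 (real (nat \<lfloor>rank_density N indep (real i)\<rfloor>) * p))"
proof -
  define D where "D j = densest indep N (real j)" for j :: nat
  define a where "a j = mrank indep (D j)" for j
  define c where "c j = real (card (D j))" for j
  define G where "G j = min 1 (real j * p)" for j :: nat
  let ?g = "\<lambda>i. min 1 (real (nat \<lfloor>rank_density N indep (real i)\<rfloor>) * p)"
  have D_sub: "D j \<subseteq> N" for j unfolding D_def by (rule densest_subset[OF M]) simp
  have D1: "D 1 = N" unfolding D_def using densest_eq_ground[OF M, of 1] by simp
  have a_mono: "a (Suc j) \<le> a j" for j
    unfolding a_def D_def by (intro mrank_mono[OF M] densest_antimono[OF M]) auto
  have layers: "G J * real (a J) + (\<Sum>j\<in>{1..<J}. G j * (real (a j) - real (a (Suc j))))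
      \<le> (\<Sum>i\<in>{1..a 1}. ?g i)"
  proof (rule sum_layers_le)
    show "a (Suc j) \<le> a j" for j by (rule a_mono)
    show "1 \<le> J" by fact
    fix i j assume "1 \<le> i" "i \<le> a j"
    then have "j \<le> nat \<lfloor>rank_density N indep (real i)\<rfloor>"
      unfolding a_def D_def by (rule le_floor_rank_density[OF M L])
    then have "real j * p \<le> real (nat \<lfloor>rank_density N indep (real i)\<rfloor>) * p"
      using \<open>0 \<le> p\<close> by (intro mult_right_mono) auto
    then show "G j \<le> ?g i" unfolding G_def by (rule min.mono[OF order_refl])
  qed
  have top: "real (a J) \<le> G J * real (a J)"
  proof (cases "a J = 0")
    case False
    then have "G J = 1" using high unfolding G_def a_def D_def by (simp add: min_def)
    then show ?thesis by simp
  qed simp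
  have layer: "p / 2 * (c j - c (Suc j)) \<le> G j * (real (a j) - real (a (Suc j)))"
    if "j \<in> {1..<J}" for j
  proof -
    have "c j - c (Suc j) \<le> real (Suc j) * (real (a j) - real (a (Suc j)))"
      unfolding c_def a_def D_def by (rule card_densest_diff_le[OF M]) auto
    also have "\<dots> \<le> 2 * real j * (real (a j) - real (a (Suc j)))"
      using that a_mono[of j] by (intro mult_right_mono) auto
    finally have "p / 2 * (c j - c (Suc j)) \<le> p / 2 * (2 * real j * (real (a j) - real (a (Suc j))))"
      using \<open>0 \<le> p\<close> by (intro mult_left_mono) auto
    moreover have "G j = real j * p" using low[of j] that unfolding G_def by simp
    ultimately show ?thesis by (simp add: algebra_simps)
  qed
  have "(\<Sum>j\<in>{1..<J}. c (Suc j)) - (\<Sum>j\<in>{1..<J}. c j) = c J - c 1"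
    using sum_Suc_diff'[OF \<open>1 \<le> J\<close>, of c] by (simp add: sum_subtractf)
  moreover have "(\<Sum>j\<in>{1..<J}. c j - c (Suc j)) = (\<Sum>j\<in>{1..<J}. c j) - (\<Sum>j\<in>{1..<J}. c (Suc j))"
    by (rule sum_subtractf)
  ultimately have "(\<Sum>j\<in>{1..<J}. c j - c (Suc j)) = c 1 - c J" by linarith
  then have "p / 2 * (c 1 - c J) = (\<Sum>j\<in>{1..<J}. p / 2 * (c j - c (Suc j)))"
    by (simp only: sum_distrib_left[symmetric])
  also have "\<dots> \<le> (\<Sum>j\<in>{1..<J}. G j * (real (a j) - real (a (Suc j))))"
    by (rule sum_mono) (rule layer)
  finally have "real (a J) + p / 2 * (c 1 - c J) \<le> (\<Sum>i\<in>{1..a 1}. ?g i)"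
    using layers top by linarith
  moreover have "real (card (N - D J)) = c 1 - c J"
    unfolding c_def D1[symmetric] using D_sub[of J] D1 matroid_finite[OF M]
    by (simp add: card_Diff_subset finite_subset of_nat_diff card_mono)
  then have "real (card (N - D J)) * p = 2 * (p / 2 * (c 1 - c J))" by simp
  ultimately have "real (a J) + real (card (N - D J)) * p \<le> 2 * (\<Sum>i\<in>{1..a 1}. ?g i)"
    by linarith
  moreover have "a 1 = mrank indep N" unfolding a_def D1 ..
  ultimately show ?thesis by (simp add: a_def D_def)
qed

lemma exists_subset_rank_plus_card_bound:
  assumes M: "matroid N indep" and L: "loopless N indep" and "0 \<le> p"
  shows "\<exists>Y\<subseteq>N. real (mrank indep Y) + real (card (N - Y)) * p
           \<le> 2 * (\<Sum>i\<in>{1..mrank indep N}. min 1 (real (nat \<lfloor>rank_density N indep (real i)\<rfloor>) * p))"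
proof -
  obtain J where J: "1 \<le> J" "J \<le> Suc (card N)" "\<forall>j<J. real j * p \<le> 1"
      "J < Suc (card N) \<longrightarrow> 1 \<le> real J * p"
    using exists_threshold_index[of "Suc (card N)" p] by auto
  have "1 \<le> real J * p" if "0 < mrank indep (densest indep N (real J))"
  proof -
    have "J \<noteq> Suc (card N)"
    proof
      assume "J = Suc (card N)"
      then have "densest indep N (real J) = {}" by (intro densest_eq_empty[OF M L]) simp
      then show False using that mrank_empty[OF M] by simp
    qed
    then show ?thesis using J(2,4) by simp
  qed
  with J(1,3) have "real (mrank indep (densest indep N (real J)))
      + real (card (N - densest indep N (real J))) * p
      \<le> 2 * (\<Sum>i\<in>{1..mrank indep N}. min 1 (real (nat \<lfloor>rank_density N indep (real i)\<rfloor>) * p))"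
    by (intro densest_layer_bound[OF M L \<open>0 \<le> p\<close>]) auto
  moreover have "densest indep N (real J) \<subseteq> N" by (rule densest_subset[OF M]) simp
  ultimately show ?thesis by blast
qed

section \<open>The expected optimum\<close>

definition expected_threshold_rank :: "'a set \<Rightarrow> ('a set \<Rightarrow> bool) \<Rightarrow> (nat \<Rightarrow> real) \<Rightarrow> nat \<Rightarrow> real \<Rightarrow> real"
  where "expected_threshold_rank N indep w n \<theta> =
    (\<Sum>S\<in>ksubsets n (card N).
       (\<Sum>f\<in>bijs N S. real (mrank indep {e\<in>N. \<theta> < w (f e)})) / real (card (bijs N S)))
    / real (n choose card N)"

lemma antimono_expected_threshold_rank:
  assumes "matroid N indep"
  shows "antimono (expected_threshold_rank N indep w n)"
proof (rule antimonoI)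
  fix x y :: real assume "x \<le> y"
  have "real (mrank indep {e\<in>N. y < w (f e)}) \<le> real (mrank indep {e\<in>N. x < w (f e)})" for f
    using antimonoD[OF antimono_mrank_threshold[OF assms] \<open>x \<le> y\<close>] by simp
  then show "expected_threshold_rank N indep w n y \<le> expected_threshold_rank N indep w n x"
    unfolding expected_threshold_rank_def by (intro divide_right_mono sum_mono) auto
qed

lemma expected_opt_le_integral_expected_threshold_rank:
  assumes M: "matroid N indep" and w: "\<And>i. i \<in> {1..n} \<Longrightarrow> 0 \<le> w i \<and> w i \<le> B"
  shows "expected_opt N indep w n \<le> integral {0..B} (expected_threshold_rank N indep w n)"
proof -
  let ?g = "\<lambda>f \<theta>. real (mrank indep {e\<in>N. \<theta> < w (f e)})"
  let ?avg = "\<lambda>h. (\<Sum>S\<in>ksubsets n (card N). (\<Sum>f\<in>bijs N S. h f) / real (card (bijs N S)))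
                 / real (n choose card N)"
  have g_int: "(?g f has_integral integral {0..B} (?g f)) {0..B}" for f
    by (rule integrable_integral[OF antimono_integrable_on[OF antimono_mrank_threshold[OF M]]])
  have "(expected_threshold_rank N indep w n has_integral ?avg (\<lambda>f. integral {0..B} (?g f))) {0..B}"
    unfolding expected_threshold_rank_def
  proof (rule has_integral_divide, rule has_integral_sum[OF finite_ksubsets])
    fix S assume "S \<in> ksubsets n (card N)"
    then have "finite S" unfolding ksubsets_def by (auto intro: finite_subset)
    then have "finite (bijs N S)" using finite_bijs matroid_finite[OF M] by blast
    then show "((\<lambda>\<theta>. (\<Sum>f\<in>bijs N S. ?g f \<theta>) / real (card (bijs N S))) has_integral
        (\<Sum>f\<in>bijs N S. integral {0..B} (?g f)) / real (card (bijs N S))) {0..B}"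
      by (rule has_integral_divide[OF has_integral_sum[OF _ g_int]])
  qed
  moreover have "expected_opt N indep w n \<le> ?avg (\<lambda>f. integral {0..B} (?g f))"
    unfolding expected_opt_def ksubsets_def[symmetric] bijs_def[symmetric]
  proof (intro divide_right_mono sum_mono)
    fix S f assume S: "S \<in> ksubsets n (card N)" and f: "f \<in> bijs N S"
    have "0 \<le> w (f e) \<and> w (f e) \<le> B" if "e \<in> N" for e
    proof (rule w)
      show "f e \<in> {1..n}" using bijs_mapsto[OF f that] S unfolding ksubsets_def by blast
    qed
    then show "opt_weight N indep (\<lambda>e. w (f e)) \<le> integral {0..B} (?g f)"
      by (rule opt_weight_le_integral_mrank_threshold[OF M])
  qed auto
  ultimately show ?thesis by (simp add: integral_unique)
qed

text \<open>Each element of N - Y lands on one of the q weights above \<theta> with probability q/n.\<close>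
lemma expected_threshold_rank_le:
  assumes M: "matroid N indep" and "card N \<le> n" "Y \<subseteq> N"
  shows "expected_threshold_rank N indep w n \<theta>
           \<le> real (mrank indep Y) + real (card (N - Y)) * (real (card {i\<in>{1..n}. \<theta> < w i}) / real n)"
proof (cases "N = {}")
  case True
  then show ?thesis unfolding expected_threshold_rank_def using mrank_empty[OF M] by simp
next
  case False
  define P where "P = {i\<in>{1..n}. \<theta> < w i}"
  define k where "k = card N"
  have "finite N" using matroid_finite[OF M] .
  then have "0 < k" "0 < n" using False \<open>card N \<le> n\<close> unfolding k_def by (auto simp: card_gt_0_iff)
  let ?bound = "\<lambda>S. real (mrank indep Y) + real (card (N - Y)) * real (card (S \<inter> P)) / real k"
  have avg_S: "(\<Sum>f\<in>bijs N S. real (mrank indep {e\<in>N. \<theta> < w (f e)})) / real (card (bijs N S))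
      \<le> ?bound S" if "S \<in> ksubsets n k" for S
  proof -
    have S: "S \<subseteq> {1..n}" "finite S" "card N = card S"
      using that unfolding ksubsets_def k_def by (auto intro: finite_subset)
    have "mrank indep {e\<in>N. \<theta> < w (f e)} \<le> mrank indep Y + card {e\<in>N - Y. f e \<in> P}"
      if "f \<in> bijs N S" for f
    proof -
      have "{e\<in>N. \<theta> < w (f e)} \<subseteq> Y \<union> {e\<in>N - Y. f e \<in> P}"
        using bijs_mapsto[OF that] S(1) unfolding P_def by blast
      then have "mrank indep {e\<in>N. \<theta> < w (f e)} \<le> mrank indep (Y \<union> {e\<in>N - Y. f e \<in> P})"
        by (rule mrank_mono[OF M])
      also have "\<dots> \<le> mrank indep Y + card {e\<in>N - Y. f e \<in> P}"
        using \<open>finite N\<close> by (intro mrank_Un_le[OF M]) auto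
      finally show ?thesis .
    qed
    then have "(\<Sum>f\<in>bijs N S. real (mrank indep {e\<in>N. \<theta> < w (f e)}))
        \<le> (\<Sum>f\<in>bijs N S. real (mrank indep Y) + real (card {e\<in>N - Y. f e \<in> P}))"
      by (intro sum_mono) (simp flip: of_nat_add)
    also have "\<dots> = real (card (bijs N S)) * ?bound S"
      using sum_card_preimage_bijs[OF \<open>finite N\<close> S(2,3), of "N - Y" P] \<open>0 < k\<close>
      unfolding k_def by (simp add: sum.distrib field_simps)
    finally show ?thesis
      using bijs_nonempty[OF \<open>finite N\<close> S(2,3)] finite_bijs[OF \<open>finite N\<close> S(2)]
      by (simp add: divide_le_eq mult.commute)
  qed
  have "P \<subseteq> {1..n}" unfolding P_def by blast
  let ?avg = "\<lambda>S. (\<Sum>f\<in>bijs N S. real (mrank indep {e\<in>N. \<theta> < w (f e)})) / real (card (bijs N S))"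
  let ?C = "real (n choose k)"
  have "(\<Sum>S\<in>ksubsets n k. ?avg S) \<le> (\<Sum>S\<in>ksubsets n k. ?bound S)"
    by (rule sum_mono) (rule avg_S)
  also have "\<dots> = ?C * (real (mrank indep Y) + real (card (N - Y)) * (real (card P) / real n))"
    using sum_card_Int_ksubsets[OF \<open>P \<subseteq> {1..n}\<close>, of k] \<open>0 < k\<close> \<open>0 < n\<close>
    by (simp add: sum.distrib card_ksubsets sum_divide_distrib[symmetric] sum_distrib_left[symmetric]
        field_simps)
  finally have "(\<Sum>S\<in>ksubsets n k. ?avg S) / ?C
      \<le> ?C * (real (mrank indep Y) + real (card (N - Y)) * (real (card P) / real n)) / ?C"
    by (rule divide_right_mono) simp
  also have "\<dots> = real (mrank indep Y) + real (card (N - Y)) * (real (card P) / real n)"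
    using \<open>card N \<le> n\<close> unfolding k_def by simp
  finally show ?thesis unfolding expected_threshold_rank_def P_def k_def .
qed

lemma expected_threshold_rank_le_hit_prob:
  assumes M: "matroid N indep" and L: "loopless N indep" and "card N \<le> n"
  shows "expected_threshold_rank N indep w n \<theta>
           \<le> 4 * (\<Sum>i\<in>{1..mrank indep N}. hit_prob w n (nat \<lfloor>rank_density N indep (real i)\<rfloor>) \<theta>)"
proof -
  define p where "p = real (card {i\<in>{1..n}. \<theta> < w i}) / real n"
  let ?m = "\<lambda>i. nat \<lfloor>rank_density N indep (real i)\<rfloor>"
  obtain Y where "Y \<subseteq> N"
    and Y: "real (mrank indep Y) + real (card (N - Y)) * p \<le> 2 * (\<Sum>i\<in>{1..mrank indep N}. min 1 (real (?m i) * p))"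
    using exists_subset_rank_plus_card_bound[OF M L, of p] unfolding p_def by auto
  have "expected_threshold_rank N indep w n \<theta> \<le> real (mrank indep Y) + real (card (N - Y)) * p"
    unfolding p_def by (rule expected_threshold_rank_le[OF M \<open>card N \<le> n\<close> \<open>Y \<subseteq> N\<close>])
  also have "\<dots> \<le> 2 * (\<Sum>i\<in>{1..mrank indep N}. min 1 (real (?m i) * p))" by (rule Y)
  also have "\<dots> \<le> 2 * (\<Sum>i\<in>{1..mrank indep N}. 2 * hit_prob w n (?m i) \<theta>)"
    using floor_rank_density_bounds[OF M L] \<open>card N \<le> n\<close> unfolding p_def
    by (intro mult_left_mono sum_mono min_le_twice_hit_prob) (auto intro: order_trans)
  finally show ?thesis by (simp add: sum_distrib_left)
qed

lemma eta_nonneg: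
  assumes "\<And>i. i \<in> {1..n} \<Longrightarrow> 0 \<le> w i"
  shows "0 \<le> eta w n a"
proof -
  have "0 \<le> Max (w ` R)" if "R \<subseteq> {1..n}" "card R = nat \<lfloor>a\<rfloor>" "1 \<le> a" for R
  proof -
    have "1 \<le> card R" using le_nat_floor[of 1 a] that(2,3) by simp
    then have "R \<noteq> {}" by auto
    then obtain x where "x \<in> R" by blast
    moreover have "finite R" using that(1) by (rule finite_subset) simp
    ultimately have "w x \<le> Max (w ` R)" by (intro Max_ge) auto
    moreover have "0 \<le> w x" using assms \<open>x \<in> R\<close> that(1) by blast
    ultimately show ?thesis by linarith
  qed
  then show ?thesis unfolding eta_def by (auto intro!: divide_nonneg_nonneg sum_nonneg)
qed

lemma integral_expected_threshold_rank_le: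
  assumes M: "matroid N indep" and L: "loopless N indep" and "card N \<le> n"
    and w: "\<And>i. i \<in> {1..n} \<Longrightarrow> 0 \<le> w i \<and> w i \<le> B"
  shows "integral {0..B} (expected_threshold_rank N indep w n) \<le> 4 * F_funct w n (rank_density N indep)"
proof -
  let ?\<rho> = "\<lambda>i. rank_density N indep (real i)"
  have "((\<lambda>\<theta>. 4 * (\<Sum>i\<in>{1..mrank indep N}. hit_prob w n (nat \<lfloor>?\<rho> i\<rfloor>) \<theta>)) has_integral
          4 * (\<Sum>i\<in>{1..mrank indep N}. eta w n (?\<rho> i))) {0..B}"
    using one_le_rank_density[OF M L] w
    by (intro has_integral_mult_right has_integral_sum has_integral_hit_prob) auto
  then have "integral {0..B} (expected_threshold_rank N indep w n)
      \<le> 4 * (\<Sum>i\<in>{1..mrank indep N}. eta w n (?\<rho> i))"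
    using expected_threshold_rank_le_hit_prob[OF assms(1-3)]
      antimono_integrable_on[OF antimono_expected_threshold_rank[OF M]]
    by (intro has_integral_le[OF integrable_integral]) auto
  then show ?thesis using F_funct_rank_density_eq_sum[OF M L] by simp
qed

lemma four_le_three_exp_div: "4 \<le> 3 * exp 1 / (exp 1 - 1 :: real)"
proof -
  have "exp 1 \<le> (3 :: real)" using exp_le by simp
  moreover have "1 < exp (1 :: real)" by simp
  ultimately show ?thesis by (simp add: le_divide_eq)
qed

theorem lemma3p2:
  fixes N :: "'a set" and indep :: "'a set \<Rightarrow> bool" and w :: "nat \<Rightarrow> real" and n :: nat
  assumes "matroid N indep" and "loopless N indep"
    and "card N \<le> n"
    and "\<And>i. i \<in> {1..n} \<Longrightarrow> w i \<ge> 0"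
  shows "expected_opt N indep w n
           \<le> 3 * exp 1 / (exp 1 - 1) * F_funct w n (rank_density N indep)"
proof -
  define B where "B = Max (insert 0 (w ` {1..n}))"
  have w: "0 \<le> w i \<and> w i \<le> B" if "i \<in> {1..n}" for i
    using assms(4)[OF that] that unfolding B_def by (intro conjI Max_ge) auto
  have "0 \<le> F_funct w n (rank_density N indep)"
    using eta_nonneg[of n w] assms(4) by (simp add: F_funct_rank_density_eq_sum[OF assms(1,2)] sum_nonneg)
  have "expected_opt N indep w n \<le> integral {0..B} (expected_threshold_rank N indep w n)"
    by (rule expected_opt_le_integral_expected_threshold_rank[OF assms(1) w])
  also have "\<dots> \<le> 4 * F_funct w n (rank_density N indep)"
    by (rule integral_expected_threshold_rank_le[OF assms(1-3) w])
  also have "\<dots> \<le> 3 * exp 1 / (exp 1 - 1) * F_funct w n (rank_density N indep)"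
    using four_le_three_exp_div \<open>0 \<le> F_funct w n (rank_density N indep)\<close> by (rule mult_right_mono)
  finally show ?thesis .
qed

end
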